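(* Let $K$ be a positive semiring, let $k\ge1$ and $d\ge2$ be integers, and let $H=(V,E)$ be a $k$-uniform, $d$-regular hypergraph with distinct hyperedges $X_1,\ldots,X_m$, where the vertices are attributes whose domains all contain $\{0,1,\ldots,d-1\}$. For $i\in[m]$ let $R_i$ be the $K$-relation over $X_i$ such that $R_i(t)=1$ if $t$ takes values in $\{0,\ldots,d-1\}$ and $\sum_{C\in X_i}t(C)\equiv \delta_i \pmod d$, and $R_i(t)=0$ otherwise, where $\delta_i=0$ for $i\neq m$ and $\delta_m=1$. Then the collection $R_1,\ldots,R_m$ is pairwise consistent but not globally consistent.
   Context: A commutative semiring $(K,+,\cdot,0,1)$ with $0\neq 1$ is positive if $a+b=0$ implies $a=b=0$, and $ab=0$ implies $a=0$ or $b=0$. For a finite set of attributes $X$, $\mathrm{Tup}(X)$ is the set of maps assigning to each $A\in X$ an element of its domain; $t[Y]$ is restriction; $XY=X\cup Y$. A $K$-relation over $X$ is a map $R:\mathrm{Tup}(X)\to K$ with finite support $R'=\{t:R(t)\neq0\}$; its marginal on $Y\subseteq X$ is $R[Y](u)=\sum_{r\in R',r[Y]=u}R(r)$. $R\equiv S$ means $aR=bS$ for nonzero $a,b\in K$. $R$ over $X$ and $S$ over $Y$ are consistent if some $K$-relation $T$ over $XY$ has $R\equiv T[X]$, $S\equiv T[Y]$. A collection $R_1,\dots,R_m$ ($R_i$ over $X_i$) is pairwise consistent if every two members are consistent, and globally consistent if some $K$-relation $T$ over $X_1\cup\cdots\cup X_m$ satisfies $R_i\equiv T[X_i]$ for all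 $i$. A hypergraph is $k$-uniform if every hyperedge has exactly $k$ vertices, and $d$-regular if every vertex lies in exactly $d$ hyperedges. *)

theory Defs
  imports "HOL-Library.FuncSet"
begin

text \<open>Positive commutative semiring (0 \<noteq> 1 is part of comm_semiring_1).\<close>
definition positive_semiring :: "'k::comm_semiring_1 itself \<Rightarrow> bool" where
  "positive_semiring _ \<longleftrightarrow>
     (\<forall>a b::'k. a + b = 0 \<longrightarrow> a = 0 \<and> b = 0) \<and>
     (\<forall>a b::'k. a * b = 0 \<longrightarrow> a = 0 \<or> b = 0)"

definition Tup :: "('a \<Rightarrow> 'v set) \<Rightarrow> 'a set \<Rightarrow> ('a \<Rightarrow> 'v) set" where
  "Tup Dom X = PiE X Dom"

definition supp :: "(('a \<Rightarrow> 'v) \<Rightarrow> 'k::zero) \<Rightarrow> ('a \<Rightarrow> 'v) set" where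
  "supp R = {t. R t \<noteq> 0}"

definition is_krel :: "('a \<Rightarrow> 'v set) \<Rightarrow> 'a set \<Rightarrow> (('a \<Rightarrow> 'v) \<Rightarrow> 'k::zero) \<Rightarrow> bool" where
  "is_krel Dom X R \<longleftrightarrow> supp R \<subseteq> Tup Dom X \<and> finite (supp R)"

definition marginal :: "(('a \<Rightarrow> 'v) \<Rightarrow> 'k::comm_monoid_add) \<Rightarrow> 'a set \<Rightarrow> ('a \<Rightarrow> 'v) \<Rightarrow> 'k" where
  "marginal R Y u = (\<Sum>r\<in>{r\<in>supp R. restrict r Y = u}. R r)"

definition kequiv :: "(('a \<Rightarrow> 'v) \<Rightarrow> 'k::semiring_0) \<Rightarrow> (('a \<Rightarrow> 'v) \<Rightarrow> 'k) \<Rightarrow> bool" where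
  "kequiv R S \<longleftrightarrow> (\<exists>a b. a \<noteq> 0 \<and> b \<noteq> 0 \<and> (\<forall>t. a * R t = b * S t))"

definition consistent ::
  "('a \<Rightarrow> 'v set) \<Rightarrow> 'a set \<Rightarrow> (('a \<Rightarrow> 'v) \<Rightarrow> 'k::comm_semiring_1) \<Rightarrow> 'a set \<Rightarrow> (('a \<Rightarrow> 'v) \<Rightarrow> 'k) \<Rightarrow> bool" where
  "consistent Dom X R Y S \<longleftrightarrow>
     (\<exists>T. is_krel Dom (X \<union> Y) T \<and> kequiv R (marginal T X) \<and> kequiv S (marginal T Y))"

definition pairwise_consistent ::
  "('a \<Rightarrow> 'v set) \<Rightarrow> 'i set \<Rightarrow> ('i \<Rightarrow> 'a set) \<Rightarrow> ('i \<Rightarrow> ('a \<Rightarrow> 'v) \<Rightarrow> 'k::comm_semiring_1) \<Rightarrow> bool" where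
  "pairwise_consistent Dom I X R \<longleftrightarrow>
     (\<forall>i\<in>I. \<forall>j\<in>I. i \<noteq> j \<longrightarrow> consistent Dom (X i) (R i) (X j) (R j))"

definition globally_consistent ::
  "('a \<Rightarrow> 'v set) \<Rightarrow> 'i set \<Rightarrow> ('i \<Rightarrow> 'a set) \<Rightarrow> ('i \<Rightarrow> ('a \<Rightarrow> 'v) \<Rightarrow> 'k::comm_semiring_1) \<Rightarrow> bool" where
  "globally_consistent Dom I X R \<longleftrightarrow>
     (\<exists>T. is_krel Dom (\<Union>i\<in>I. X i) T \<and> (\<forall>i\<in>I. kequiv (R i) (marginal T (X i))))"

text \<open>The values 0..d-1 are represented in the value type via an injection enc.
  mod_rel Dom enc d X \<delta> t = 1 iff t is a tuple over X taking values in {0..d-1}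
  whose sum is congruent to \<delta> mod d, else 0.\<close>
definition mod_rel ::
  "('a \<Rightarrow> 'v set) \<Rightarrow> (nat \<Rightarrow> 'v) \<Rightarrow> nat \<Rightarrow> 'a set \<Rightarrow> nat \<Rightarrow> ('a \<Rightarrow> 'v) \<Rightarrow> 'k::comm_semiring_1" where
  "mod_rel Dom enc d X \<delta> t =
     (if t \<in> Tup Dom X \<and> (\<forall>C\<in>X. t C \<in> enc ` {0..<d}) \<and>
         (\<Sum>C\<in>X. inv_into {0..<d} enc (t C)) mod d = \<delta> mod d
      then 1 else 0)"

end

theory Submission
  imports Defs "HOL-Number_Theory.Cong" "HOL-Library.Indicator_Function"
begin

text \<open>
  Pairwise consistency: two distinct hyperedges Y, Z of equal size are incomparable, so there are
  p \<in> Z - Y and q \<in> Y - Z. Take T to be the 0/1-relation of digit tuples on Y \<union> Z satisfying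
  both congruences. Replacing the Y-part of such a tuple by another admissible one and repairing
  the Z-congruence by shifting the digit at p maps fibres of the projection to Y injectively into
  each other, so all admissible fibres have the same size N > 0 and T[Y] = N R_Y; symmetrically
  for Z (using q).

  Global inconsistency: a tuple t in the support of a global witness projects into the support of
  every R_i, hence the sum over i of the digit sums of t on X_i is congruent to the sum of the
  \<delta>_i, i.e. to 1 modulo d. By d-regularity that double sum is d times the digit sum of t over V.
\<close>

lemma positive_semiring_no_zero_divisors:
  assumes "positive_semiring TYPE('k::comm_semiring_1)"
  shows "(x::'k) * y = 0 \<longleftrightarrow> x = 0 \<or> y = 0"
proof
  assume "x * y = 0"
  then show "x = 0 \<or> y = 0" using assms unfolding positive_semiring_def by blast
qed auto

lemma positive_semiring_of_nat_neq_0: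
  assumes "positive_semiring TYPE('k::comm_semiring_1)" and "n > 0"
  shows "(of_nat n :: 'k) \<noteq> 0"
proof
  obtain n' where n: "n = Suc n'" using assms(2) by (cases n) auto
  assume "(of_nat n :: 'k) = 0"
  then have "(1::'k) + of_nat n' = 0" using n by simp
  then have "(1::'k) = 0" using assms(1) unfolding positive_semiring_def by blast
  then show False by simp
qed

lemma positive_semiring_sum_neq_0:
  assumes "positive_semiring TYPE('k::comm_semiring_1)" and "finite A" and "x \<in> A"
    and "\<And>y. y \<in> A \<Longrightarrow> f y \<noteq> (0::'k)"
  shows "sum f A \<noteq> 0"
proof
  assume "sum f A = 0"
  then have "f x + sum f (A - {x}) = 0" using assms(2,3) by (simp add: sum.remove)
  then have "f x = 0" using assms(1) unfolding positive_semiring_def by blast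
  then show False using assms(3,4) by blast
qed

lemma kequiv_neq_0_iff:
  assumes "positive_semiring TYPE('k::comm_semiring_1)" and "kequiv R (S :: _ \<Rightarrow> 'k)"
  shows "R t \<noteq> 0 \<longleftrightarrow> S t \<noteq> 0"
proof -
  obtain a b :: 'k where "a \<noteq> 0" "b \<noteq> 0" "a * R t = b * S t"
    using assms(2) unfolding kequiv_def by blast
  then show ?thesis using positive_semiring_no_zero_divisors[OF assms(1)] by metis
qed

lemma marginal_restrict_neq_0:
  assumes "positive_semiring TYPE('k::comm_semiring_1)" and "finite (supp T)"
    and "t \<in> supp (T :: _ \<Rightarrow> 'k)"
  shows "marginal T Y (restrict t Y) \<noteq> 0"
  unfolding marginal_def
  using assms by (intro positive_semiring_sum_neq_0) (auto simp: supp_def)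

lemma marginal_neq_0_imp_supp:
  assumes "marginal T Y u \<noteq> 0"
  obtains t where "t \<in> supp T" and "restrict t Y = u"
proof -
  have "{r \<in> supp T. restrict r Y = u} \<noteq> {}"
    using assms unfolding marginal_def by (metis sum.empty)
  then show ?thesis using that by blast
qed

lemma supp_indicator: "supp (indicator S :: _ \<Rightarrow> 'k::zero_neq_one) = S"
  by (auto simp: supp_def indicator_def)

definition fibre :: "('a \<Rightarrow> 'v) set \<Rightarrow> 'a set \<Rightarrow> ('a \<Rightarrow> 'v) \<Rightarrow> ('a \<Rightarrow> 'v) set" where
  "fibre S Y u = {r \<in> S. restrict r Y = u}"

lemma finite_fibre: "finite S \<Longrightarrow> finite (fibre S Y u)"
  unfolding fibre_def by simp

lemma marginal_indicator:
  assumes "finite S"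
  shows "marginal (indicator S :: _ \<Rightarrow> 'k::comm_semiring_1) Y u = of_nat (card (fibre S Y u))"
  unfolding marginal_def supp_indicator fibre_def using assms by simp

lemma sum_edges_regular:
  fixes f :: "'a \<Rightarrow> 'b::comm_semiring_1"
  assumes "finite V" and "finite I" and "\<forall>i\<in>I. X i \<subseteq> V"
    and "\<forall>v\<in>V. card {i\<in>I. v \<in> X i} = d"
  shows "(\<Sum>i\<in>I. \<Sum>v\<in>X i. f v) = of_nat d * (\<Sum>v\<in>V. f v)"
proof -
  have "(\<Sum>i\<in>I. \<Sum>v\<in>X i. f v) = (\<Sum>i\<in>I. \<Sum>v\<in>V. if v \<in> X i then f v else 0)"
  proof (rule sum.cong[OF refl])
    fix i assume "i \<in> I"
    then have "V \<inter> X i = X i" using assms(3) by blast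
    then show "(\<Sum>v\<in>X i. f v) = (\<Sum>v\<in>V. if v \<in> X i then f v else 0)"
      using sum.inter_restrict[OF assms(1), of f "X i"] by simp
  qed
  also have "\<dots> = (\<Sum>v\<in>V. \<Sum>i\<in>I. if v \<in> X i then f v else 0)"
    by (rule sum.swap)
  also have "\<dots> = (\<Sum>v\<in>V. of_nat d * f v)"
  proof (rule sum.cong[OF refl])
    fix v assume "v \<in> V"
    then show "(\<Sum>i\<in>I. if v \<in> X i then f v else 0) = of_nat d * f v"
      using sum.inter_filter[OF assms(2), of "\<lambda>_. f v" "\<lambda>i. v \<in> X i", symmetric] assms(4)
      by simp
  qed
  finally show ?thesis by (simp add: sum_distrib_left)
qed

definition digit :: "(nat \<Rightarrow> 'v) \<Rightarrow> nat \<Rightarrow> 'v \<Rightarrow> nat" where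
  "digit enc d x = inv_into {0..<d} enc x"

definition digit_sum :: "(nat \<Rightarrow> 'v) \<Rightarrow> nat \<Rightarrow> 'a set \<Rightarrow> ('a \<Rightarrow> 'v) \<Rightarrow> nat" where
  "digit_sum enc d Y t = (\<Sum>C\<in>Y. digit enc d (t C))"

definition digit_tuples :: "(nat \<Rightarrow> 'v) \<Rightarrow> nat \<Rightarrow> 'a set \<Rightarrow> nat \<Rightarrow> ('a \<Rightarrow> 'v) set" where
  "digit_tuples enc d Y \<delta> =
     {t \<in> Y \<rightarrow>\<^sub>E enc ` {0..<d}. [digit_sum enc d Y t = \<delta>] (mod d)}"

definition joint_digit_tuples ::
  "(nat \<Rightarrow> 'v) \<Rightarrow> nat \<Rightarrow> 'a set \<Rightarrow> nat \<Rightarrow> 'a set \<Rightarrow> nat \<Rightarrow> ('a \<Rightarrow> 'v) set" where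
  "joint_digit_tuples enc d Y \<delta> Z \<epsilon> =
     {t \<in> (Y \<union> Z) \<rightarrow>\<^sub>E enc ` {0..<d}.
        [digit_sum enc d Y t = \<delta>] (mod d) \<and> [digit_sum enc d Z t = \<epsilon>] (mod d)}"

lemma digit_enc: "inj_on enc {0..<d} \<Longrightarrow> n < d \<Longrightarrow> digit enc d (enc n) = n"
  unfolding digit_def by (simp add: inv_into_f_f)

lemma enc_digit: "x \<in> enc ` {0..<d} \<Longrightarrow> enc (digit enc d x) = x"
  unfolding digit_def by (simp add: f_inv_into_f)

lemma digit_less: "x \<in> enc ` {0..<d} \<Longrightarrow> digit enc d x < d"
  unfolding digit_def using inv_into_into[of x enc "{0..<d}"] by simp

lemma digit_sum_cong: "(\<And>C. C \<in> Y \<Longrightarrow> t C = t' C) \<Longrightarrow> digit_sum enc d Y t = digit_sum enc d Y t'"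
  unfolding digit_sum_def by simp

lemma mod_rel_eq_indicator:
  assumes "\<forall>A\<in>Y. enc ` {0..<d} \<subseteq> Dom A"
  shows "mod_rel Dom enc d Y \<delta> = indicator (digit_tuples enc d Y \<delta>)"
  using assms
  by (auto simp: fun_eq_iff mod_rel_def Tup_def digit_tuples_def digit_sum_def digit_def
      cong_def PiE_iff indicator_def; blast)

lemma restrict_enc_PiE:
  fixes h :: "'a \<Rightarrow> nat"
  assumes "\<And>C. C \<in> Y \<Longrightarrow> h C < d"
  shows "(\<lambda>C\<in>Y. enc (h C)) \<in> Y \<rightarrow>\<^sub>E enc ` {0..<d}"
  unfolding restrict_PiE_iff using assms by (intro ballI imageI) simp

lemma digit_sum_restrict_enc:
  assumes "inj_on enc {0..<d}" and "\<And>C. C \<in> Y \<Longrightarrow> h C < d" and "Y' \<subseteq> Y"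
  shows "digit_sum enc d Y' (\<lambda>C\<in>Y. enc (h C)) = sum h Y'"
  using assms unfolding digit_sum_def by (auto simp: digit_enc intro!: sum.cong)

lemma digit_tuples_nonempty:
  assumes "inj_on enc {0..<d}" and "d > 0" and "finite Y" and "c \<in> Y"
  shows "digit_tuples enc d Y \<delta> \<noteq> {}"
proof -
  define h where "h C = (if C = c then \<delta> mod d else 0)" for C
  have h: "h C < d" for C using assms(2) unfolding h_def by simp
  have "sum h Y = \<delta> mod d" using assms(3,4) unfolding h_def by simp
  then have "(\<lambda>C\<in>Y. enc (h C)) \<in> digit_tuples enc d Y \<delta>"
    using restrict_enc_PiE[where h = h, OF h]
      digit_sum_restrict_enc[where h = h, OF assms(1) h subset_refl]
    unfolding digit_tuples_def by (simp add: cong_def)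
  then show ?thesis by blast
qed

lemma joint_digit_tuples_nonempty:
  assumes "inj_on enc {0..<d}" and "d > 0" and "finite Y" and "finite Z"
    and "p \<in> Z - Y" and "q \<in> Y - Z"
  shows "joint_digit_tuples enc d Y \<delta> Z \<epsilon> \<noteq> {}"
proof -
  define h where "h C = (if C = q then \<delta> mod d else if C = p then \<epsilon> mod d else 0)" for C
  have h: "h C < d" for C using assms(2) unfolding h_def by simp
  have "sum h Y = \<delta> mod d" and "sum h Z = \<epsilon> mod d"
    using assms(3-6) unfolding h_def by (auto simp: sum.If_cases)
  then have "(\<lambda>C\<in>Y \<union> Z. enc (h C)) \<in> joint_digit_tuples enc d Y \<delta> Z \<epsilon>"
    using restrict_enc_PiE[where h = h and Y = "Y \<union> Z", OF h]
      digit_sum_restrict_enc[where h = h, OF assms(1) h Un_upper1]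
      digit_sum_restrict_enc[where h = h, OF assms(1) h Un_upper2]
    unfolding joint_digit_tuples_def by (simp add: cong_def)
  then show ?thesis by blast
qed

lemma joint_digit_tuples_commute:
  "joint_digit_tuples enc d Y \<delta> Z \<epsilon> = joint_digit_tuples enc d Z \<epsilon> Y \<delta>"
  unfolding joint_digit_tuples_def by (auto simp: Un_commute)

lemma restrict_joint_digit_tuples:
  assumes "r \<in> joint_digit_tuples enc d Y \<delta> Z \<epsilon>"
  shows "restrict r Y \<in> digit_tuples enc d Y \<delta>"
proof -
  have "digit_sum enc d Y (restrict r Y) = digit_sum enc d Y r" by (rule digit_sum_cong) simp
  then show ?thesis using assms unfolding joint_digit_tuples_def digit_tuples_def by auto
qed

lemma digit_sum_split:
  assumes "finite Z" and "p \<in> Z - Y"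
  shows "digit_sum enc d Z t
           = digit enc d (t p) + digit_sum enc d (Z \<inter> Y) t + digit_sum enc d (Z - Y - {p}) t"
proof -
  have "digit_sum enc d (Z - Y) t = digit enc d (t p) + digit_sum enc d (Z - Y - {p}) t"
    unfolding digit_sum_def using assms by (intro sum.remove) auto
  then show ?thesis
    using sum.Int_Diff[OF assms(1), of "\<lambda>C. digit enc d (t C)" Y] unfolding digit_sum_def by simp
qed

definition fibre_transfer ::
  "(nat \<Rightarrow> 'v) \<Rightarrow> nat \<Rightarrow> 'a set \<Rightarrow> ('a \<Rightarrow> 'v) \<Rightarrow> 'a \<Rightarrow> nat \<Rightarrow> ('a \<Rightarrow> 'v) \<Rightarrow> 'a \<Rightarrow> 'v" where
  "fibre_transfer enc d Y u' p s r =
     (\<lambda>C. if C \<in> Y then u' C else r C)(p := enc ((digit enc d (r p) + s) mod d))"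

lemma fibre_transfer_apply:
  assumes "p \<notin> Y"
  shows "fibre_transfer enc d Y u' p s r C =
           (if C \<in> Y then u' C else if C = p then enc ((digit enc d (r p) + s) mod d) else r C)"
  using assms unfolding fibre_transfer_def by auto

lemma fibre_transfer_PiE:
  assumes p: "p \<in> Z - Y" and "d > 0"
    and u': "u' \<in> Y \<rightarrow>\<^sub>E enc ` {0..<d}" and r: "r \<in> (Y \<union> Z) \<rightarrow>\<^sub>E enc ` {0..<d}"
  shows "fibre_transfer enc d Y u' p s r \<in> (Y \<union> Z) \<rightarrow>\<^sub>E enc ` {0..<d}"
proof (rule PiE_I)
  fix C assume "C \<in> Y \<union> Z"
  then show "fibre_transfer enc d Y u' p s r C \<in> enc ` {0..<d}"
    using p \<open>d > 0\<close> PiE_mem[OF u'] PiE_mem[OF r] by (simp add: fibre_transfer_apply) blast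
next
  fix C assume C: "C \<notin> Y \<union> Z"
  moreover have "C \<noteq> p" using p C by blast
  ultimately have "fibre_transfer enc d Y u' p s r C = r C" by (simp add: fibre_transfer_def)
  also have "r C = undefined" using r C by (rule PiE_arb)
  finally show "fibre_transfer enc d Y u' p s r C = undefined" .
qed

lemma digit_sum_fibre_transfer:
  assumes "finite Z" and p: "p \<in> Z - Y" and "d > 0" and enc: "inj_on enc {0..<d}"
    and s: "[digit_sum enc d (Z \<inter> Y) u' + s = digit_sum enc d (Z \<inter> Y) (restrict r Y)] (mod d)"
  shows "[digit_sum enc d Z (fibre_transfer enc d Y u' p s r) = digit_sum enc d Z r] (mod d)"
proof -
  let ?g = "fibre_transfer enc d Y u' p s r"
  let ?a = "digit enc d (r p)" and ?w = "digit_sum enc d (Z - Y - {p}) r"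
  let ?z = "digit_sum enc d (Z \<inter> Y) r" and ?z' = "digit_sum enc d (Z \<inter> Y) u'"
  have "digit enc d (?g p) = (?a + s) mod d"
    using p digit_enc[OF enc] \<open>d > 0\<close> by (simp add: fibre_transfer_apply)
  moreover have "digit_sum enc d (Z \<inter> Y) ?g = ?z'"
    using p by (intro digit_sum_cong) (simp add: fibre_transfer_apply)
  moreover have "digit_sum enc d (Z - Y - {p}) ?g = ?w"
    using p by (intro digit_sum_cong) (simp add: fibre_transfer_apply)
  ultimately have "digit_sum enc d Z ?g = (?a + s) mod d + ?z' + ?w"
    using digit_sum_split[OF assms(1) p, of enc d ?g] by simp
  also have "[(?a + s) mod d + ?z' + ?w = ?a + s + ?z' + ?w] (mod d)"
    by (intro cong_add cong_refl) simp
  also have "?a + s + ?z' + ?w = ?a + (?z' + s) + ?w"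
    by (simp add: ac_simps)
  also have "digit_sum enc d (Z \<inter> Y) (restrict r Y) = ?z"
    by (intro digit_sum_cong) simp
  then have "[?a + (?z' + s) + ?w = ?a + ?z + ?w] (mod d)"
    using s by (intro cong_add cong_refl) simp
  also have "?a + ?z + ?w = digit_sum enc d Z r"
    by (rule digit_sum_split[OF assms(1) p, symmetric])
  finally show ?thesis .
qed

lemma fibre_transfer_mem:
  assumes "finite Z" and p: "p \<in> Z - Y" and "d > 0" and enc: "inj_on enc {0..<d}"
    and u': "u' \<in> digit_tuples enc d Y \<delta>"
    and s: "[digit_sum enc d (Z \<inter> Y) u' + s = digit_sum enc d (Z \<inter> Y) u] (mod d)"
    and r: "r \<in> fibre (joint_digit_tuples enc d Y \<delta> Z \<epsilon>) Y u"
  shows "fibre_transfer enc d Y u' p s r \<in> fibre (joint_digit_tuples enc d Y \<delta> Z \<epsilon>) Y u'"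
proof -
  let ?g = "fibre_transfer enc d Y u' p s r"
  have rE: "r \<in> (Y \<union> Z) \<rightarrow>\<^sub>E enc ` {0..<d}" and rZ: "[digit_sum enc d Z r = \<epsilon>] (mod d)"
    and ru: "restrict r Y = u"
    using r unfolding fibre_def joint_digit_tuples_def by auto
  have u'E: "u' \<in> Y \<rightarrow>\<^sub>E enc ` {0..<d}" and u'Y: "[digit_sum enc d Y u' = \<delta>] (mod d)"
    using u' unfolding digit_tuples_def by auto
  have gY: "?g C = u' C" if "C \<in> Y" for C
    using that p by (simp add: fibre_transfer_apply)
  have "[digit_sum enc d Y ?g = \<delta>] (mod d)"
    using u'Y gY digit_sum_cong[of Y ?g u' enc d] by simp
  moreover have "[digit_sum enc d Z ?g = \<epsilon>] (mod d)"
    using digit_sum_fibre_transfer[OF assms(1-4)] s ru rZ cong_trans by blast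
  moreover have "restrict ?g Y = u'"
    using gY u'E by (auto simp: fun_eq_iff PiE_def extensional_def)
  ultimately show ?thesis
    using fibre_transfer_PiE[OF p \<open>d > 0\<close> u'E rE] unfolding fibre_def joint_digit_tuples_def by simp
qed

lemma inj_on_fibre_transfer:
  assumes p: "p \<in> Z - Y" and "d > 0" and enc: "inj_on enc {0..<d}"
  shows "inj_on (fibre_transfer enc d Y u' p s) (fibre (joint_digit_tuples enc d Y \<delta> Z \<epsilon>) Y u)"
proof (rule inj_onI)
  fix r1 r2
  assume r1: "r1 \<in> fibre (joint_digit_tuples enc d Y \<delta> Z \<epsilon>) Y u"
    and r2: "r2 \<in> fibre (joint_digit_tuples enc d Y \<delta> Z \<epsilon>) Y u"
    and eq: "fibre_transfer enc d Y u' p s r1 = fibre_transfer enc d Y u' p s r2"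
  have E: "r1 p \<in> enc ` {0..<d}" "r2 p \<in> enc ` {0..<d}"
    using r1 r2 p unfolding fibre_def joint_digit_tuples_def by (auto simp: PiE_iff)
  have "enc ((digit enc d (r1 p) + s) mod d) = enc ((digit enc d (r2 p) + s) mod d)"
    using fun_cong[OF eq, of p] unfolding fibre_transfer_def by simp
  then have "(digit enc d (r1 p) + s) mod d = (digit enc d (r2 p) + s) mod d"
    using enc \<open>d > 0\<close> by (auto dest: inj_onD)
  then have "[digit enc d (r1 p) = digit enc d (r2 p)] (mod d)"
    using cong_add_rcancel_nat unfolding cong_def by blast
  then have "digit enc d (r1 p) = digit enc d (r2 p)"
    using digit_less[OF E(1)] digit_less[OF E(2)] by (rule cong_less_modulus_unique_nat)
  then have at_p: "r1 p = r2 p"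
    using enc_digit[OF E(1)] enc_digit[OF E(2)] by metis
  show "r1 = r2"
  proof
    fix C
    consider "C \<in> Y" | "C = p" | "C \<notin> Y" "C \<noteq> p" by blast
    then show "r1 C = r2 C"
    proof cases
      case 1
      have "restrict r1 Y C = restrict r2 Y C" using r1 r2 unfolding fibre_def by simp
      then show ?thesis using 1 by simp
    next
      case 2
      then show ?thesis using at_p by simp
    next
      case 3
      then show ?thesis using fun_cong[OF eq, of C] unfolding fibre_transfer_def by simp
    qed
  qed
qed

lemma finite_joint_digit_tuples:
  assumes "finite Y" and "finite Z"
  shows "finite (joint_digit_tuples enc d Y \<delta> Z \<epsilon>)"
proof (rule finite_subset)
  show "joint_digit_tuples enc d Y \<delta> Z \<epsilon> \<subseteq> (Y \<union> Z) \<rightarrow>\<^sub>E enc ` {0..<d}"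
    unfolding joint_digit_tuples_def by blast
  show "finite ((Y \<union> Z) \<rightarrow>\<^sub>E enc ` {0..<d})" using assms by (intro finite_PiE) auto
qed

lemma card_fibre_le:
  assumes "finite Y" and "finite Z" and "p \<in> Z - Y" and "d > 0" and "inj_on enc {0..<d}"
    and u': "u' \<in> digit_tuples enc d Y \<delta>"
  shows "card (fibre (joint_digit_tuples enc d Y \<delta> Z \<epsilon>) Y u)
           \<le> card (fibre (joint_digit_tuples enc d Y \<delta> Z \<epsilon>) Y u')"
proof -
  let ?z = "digit_sum enc d (Z \<inter> Y) u" and ?z' = "digit_sum enc d (Z \<inter> Y) u'"
  obtain d' where d': "d = Suc d'" using \<open>d > 0\<close> by (cases d) auto
  \<comment> \<open>a representative of z - z' modulo d that avoids truncated subtraction\<close>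
  define s where "s = ?z + d' * ?z'"
  have "?z' + s = ?z + d * ?z'" unfolding s_def d' by simp
  then have s: "[?z' + s = ?z] (mod d)" by (simp add: cong_def)
  have "fibre_transfer enc d Y u' p s ` fibre (joint_digit_tuples enc d Y \<delta> Z \<epsilon>) Y u
          \<subseteq> fibre (joint_digit_tuples enc d Y \<delta> Z \<epsilon>) Y u'"
    using fibre_transfer_mem[OF assms(2-5) u' s] by blast
  moreover have "finite (fibre (joint_digit_tuples enc d Y \<delta> Z \<epsilon>) Y u')"
    using finite_joint_digit_tuples[OF assms(1,2)] by (rule finite_fibre)
  ultimately show ?thesis
    using inj_on_fibre_transfer[OF assms(3-5)] by (intro card_inj_on_le)
qed

lemma kequiv_mod_rel_marginal_joint:
  assumes K: "positive_semiring TYPE('k::comm_semiring_1)"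
    and fin: "finite Y" "finite Z" and p: "p \<in> Z - Y" and q: "q \<in> Y - Z"
    and "d > 0" and enc: "inj_on enc {0..<d}" and dom: "\<forall>A\<in>Y. enc ` {0..<d} \<subseteq> Dom A"
  shows "kequiv (mod_rel Dom enc d Y \<delta> :: _ \<Rightarrow> 'k)
           (marginal (indicator (joint_digit_tuples enc d Y \<delta> Z \<epsilon>)) Y)"
proof -
  let ?J = "joint_digit_tuples enc d Y \<delta> Z \<epsilon>"
  obtain r0 where r0: "r0 \<in> ?J"
    using joint_digit_tuples_nonempty[OF enc \<open>d > 0\<close> fin p q] by blast
  define N where "N = card (fibre ?J Y (restrict r0 Y))"
  have u0: "restrict r0 Y \<in> digit_tuples enc d Y \<delta>"
    using r0 by (rule restrict_joint_digit_tuples)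
  have "r0 \<in> fibre ?J Y (restrict r0 Y)" using r0 unfolding fibre_def by simp
  then have "N > 0"
    unfolding N_def using finite_fibre[OF finite_joint_digit_tuples[OF fin]] card_gt_0_iff by blast
  have card_fibre: "card (fibre ?J Y u) = N * indicator (digit_tuples enc d Y \<delta>) u" for u
  proof (cases "u \<in> digit_tuples enc d Y \<delta>")
    case True
    then show ?thesis unfolding N_def
      using card_fibre_le[OF fin p \<open>d > 0\<close> enc True] card_fibre_le[OF fin p \<open>d > 0\<close> enc u0]
      by (simp add: le_antisym)
  next
    case False
    then have "fibre ?J Y u = {}"
      unfolding fibre_def using restrict_joint_digit_tuples by blast
    then show ?thesis using False by simp
  qed
  have "of_nat N * mod_rel Dom enc d Y \<delta> u = 1 * marginal (indicator ?J :: _ \<Rightarrow> 'k) Y u" for u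
    unfolding mod_rel_eq_indicator[OF dom] marginal_indicator[OF finite_joint_digit_tuples[OF fin]]
    using card_fibre[of u] by (simp add: indicator_def)
  moreover have "(of_nat N :: 'k) \<noteq> 0" using positive_semiring_of_nat_neq_0[OF K \<open>N > 0\<close>] .
  ultimately show ?thesis unfolding kequiv_def by (metis one_neq_zero)
qed

lemma consistent_mod_rel:
  assumes K: "positive_semiring TYPE('k::comm_semiring_1)"
    and fin: "finite Y" "finite Z" and "\<not> Y \<subseteq> Z" and "\<not> Z \<subseteq> Y"
    and "d > 0" and enc: "inj_on enc {0..<d}" and dom: "\<forall>A\<in>Y \<union> Z. enc ` {0..<d} \<subseteq> Dom A"
  shows "consistent Dom Y (mod_rel Dom enc d Y \<delta> :: _ \<Rightarrow> 'k) Z (mod_rel Dom enc d Z \<epsilon>)"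
proof -
  obtain p q where p: "p \<in> Z - Y" and q: "q \<in> Y - Z" using assms(4,5) by blast
  let ?J = "joint_digit_tuples enc d Y \<delta> Z \<epsilon>"
  have "(Y \<union> Z) \<rightarrow>\<^sub>E enc ` {0..<d} \<subseteq> Tup Dom (Y \<union> Z)"
    unfolding Tup_def using dom by (intro PiE_mono) blast
  then have "supp (indicator ?J :: _ \<Rightarrow> 'k) \<subseteq> Tup Dom (Y \<union> Z)"
    unfolding supp_indicator joint_digit_tuples_def by blast
  then have "is_krel Dom (Y \<union> Z) (indicator ?J :: _ \<Rightarrow> 'k)"
    unfolding is_krel_def supp_indicator using finite_joint_digit_tuples[OF fin] by blast
  moreover have "kequiv (mod_rel Dom enc d Y \<delta> :: _ \<Rightarrow> 'k) (marginal (indicator ?J) Y)"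
    using dom by (intro kequiv_mod_rel_marginal_joint[OF K fin p q \<open>d > 0\<close> enc]) blast
  moreover have "kequiv (mod_rel Dom enc d Z \<epsilon> :: _ \<Rightarrow> 'k) (marginal (indicator ?J) Z)"
    unfolding joint_digit_tuples_commute[of enc d Y] using dom
    by (intro kequiv_mod_rel_marginal_joint[OF K fin(2,1) q p \<open>d > 0\<close> enc]) blast
  ultimately show ?thesis unfolding consistent_def by blast
qed

lemma not_globally_consistent_mod_rel:
  fixes \<delta> :: "'i \<Rightarrow> nat"
  assumes K: "positive_semiring TYPE('k::comm_semiring_1)"
    and "finite V" and "finite I" and "i0 \<in> I" and "X i0 \<noteq> {}"
    and edges: "\<forall>i\<in>I. X i \<subseteq> V" and regular: "\<forall>v\<in>V. card {i\<in>I. v \<in> X i} = d"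
    and "d > 0" and total: "\<not> [(\<Sum>i\<in>I. \<delta> i) = 0] (mod d)"
    and enc: "inj_on enc {0..<d}" and dom: "\<forall>A\<in>V. enc ` {0..<d} \<subseteq> Dom A"
  shows "\<not> globally_consistent Dom I X (\<lambda>i. mod_rel Dom enc d (X i) (\<delta> i) :: _ \<Rightarrow> 'k)"
proof
  assume "globally_consistent Dom I X (\<lambda>i. mod_rel Dom enc d (X i) (\<delta> i) :: _ \<Rightarrow> 'k)"
  then obtain T :: "_ \<Rightarrow> 'k" where "is_krel Dom (\<Union>i\<in>I. X i) T"
    and equiv: "\<And>i. i \<in> I \<Longrightarrow> kequiv (mod_rel Dom enc d (X i) (\<delta> i)) (marginal T (X i))"
    unfolding globally_consistent_def by blast
  then have finT: "finite (supp T)" unfolding is_krel_def by blast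
  have rel: "(mod_rel Dom enc d (X i) (\<delta> i) :: _ \<Rightarrow> 'k) = indicator (digit_tuples enc d (X i) (\<delta> i))"
    if "i \<in> I" for i
    using that edges dom by (intro mod_rel_eq_indicator) blast
  have fin: "finite (X i)" if "i \<in> I" for i
    using that edges \<open>finite V\<close> finite_subset by blast
  obtain t where t: "t \<in> supp T"
  proof -
    obtain u where u: "u \<in> digit_tuples enc d (X i0) (\<delta> i0)"
      using digit_tuples_nonempty[OF enc \<open>d > 0\<close> fin[OF \<open>i0 \<in> I\<close>]] \<open>X i0 \<noteq> {}\<close> by blast
    then have "mod_rel Dom enc d (X i0) (\<delta> i0) u \<noteq> (0::'k)"
      using rel[OF \<open>i0 \<in> I\<close>] by simp
    then have "marginal T (X i0) u \<noteq> 0"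
      using kequiv_neq_0_iff[OF K equiv[OF \<open>i0 \<in> I\<close>]] by blast
    then show ?thesis using that by (rule marginal_neq_0_imp_supp)
  qed
  have "[digit_sum enc d (X i) t = \<delta> i] (mod d)" if "i \<in> I" for i
  proof -
    have "marginal T (X i) (restrict t (X i)) \<noteq> 0"
      using marginal_restrict_neq_0[OF K finT t] .
    then have "restrict t (X i) \<in> digit_tuples enc d (X i) (\<delta> i)"
      using kequiv_neq_0_iff[OF K equiv[OF that]] rel[OF that] by (simp add: indicator_eq_0_iff)
    moreover have "digit_sum enc d (X i) (restrict t (X i)) = digit_sum enc d (X i) t"
      by (rule digit_sum_cong) simp
    ultimately show ?thesis unfolding digit_tuples_def by simp
  qed
  then have "[(\<Sum>i\<in>I. \<delta> i) = (\<Sum>i\<in>I. digit_sum enc d (X i) t)] (mod d)"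
    by (intro cong_sum) (simp add: cong_sym)
  also have "(\<Sum>i\<in>I. digit_sum enc d (X i) t) = d * (\<Sum>v\<in>V. digit enc d (t v))"
    unfolding digit_sum_def using sum_edges_regular[OF \<open>finite V\<close> \<open>finite I\<close> edges regular,
        where f = "\<lambda>v. digit enc d (t v)"] by simp
  also have "[d * (\<Sum>v\<in>V. digit enc d (t v)) = 0] (mod d)"
    by (rule cong_mult_self_left)
  finally show False using total by contradiction
qed

theorem mainTheorem15:
  fixes V :: "'a set" and X :: "nat \<Rightarrow> 'a set" and m k d :: nat
    and Dom :: "'a \<Rightarrow> 'v set" and enc :: "nat \<Rightarrow> 'v"
  assumes K: "positive_semiring TYPE('k::comm_semiring_1)"
    and k: "k \<ge> 1" and d: "d \<ge> 2" and m: "m \<ge> 1"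
    and finV: "finite V"
    and edges: "\<forall>i\<in>{1..m}. X i \<subseteq> V"
    and distinct: "inj_on X {1..m}"
    and uniform: "\<forall>i\<in>{1..m}. card (X i) = k"
    and regular: "\<forall>v\<in>V. card {i\<in>{1..m}. v \<in> X i} = d"
    and enc_inj: "inj_on enc {0..<d}"
    and doms: "\<forall>A\<in>V. enc ` {0..<d} \<subseteq> Dom A"
  shows "pairwise_consistent Dom {1..m} X
           (\<lambda>i. (mod_rel Dom enc d (X i) (if i = m then 1 else 0) :: ('a \<Rightarrow> 'v) \<Rightarrow> 'k))
       \<and> \<not> globally_consistent Dom {1..m} X
           (\<lambda>i. (mod_rel Dom enc d (X i) (if i = m then 1 else 0) :: ('a \<Rightarrow> 'v) \<Rightarrow> 'k))"
proof
  have "d > 0" using d by simp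
  have fin: "finite (X i)" if "i \<in> {1..m}" for i
    using that edges finV finite_subset by blast
  have incomparable: "\<not> X i \<subseteq> X j" if "i \<in> {1..m}" "j \<in> {1..m}" "i \<noteq> j" for i j
  proof
    assume "X i \<subseteq> X j"
    then have "X i = X j" using card_subset_eq[OF fin[OF that(2)]] uniform that by simp
    then show False using inj_onD[OF distinct] that by blast
  qed
  show "pairwise_consistent Dom {1..m} X
          (\<lambda>i. (mod_rel Dom enc d (X i) (if i = m then 1 else 0) :: ('a \<Rightarrow> 'v) \<Rightarrow> 'k))"
    unfolding pairwise_consistent_def
  proof (intro ballI impI)
    fix i j assume i: "i \<in> {1..m}" and j: "j \<in> {1..m}" and "i \<noteq> j"
    have "\<forall>A\<in>X i \<union> X j. enc ` {0..<d} \<subseteq> Dom A" using edges doms i j by blast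
    then show "consistent Dom (X i) (mod_rel Dom enc d (X i) (if i = m then 1 else 0) :: _ \<Rightarrow> 'k)
                 (X j) (mod_rel Dom enc d (X j) (if j = m then 1 else 0))"
      using incomparable i j \<open>i \<noteq> j\<close>
      by (intro consistent_mod_rel[OF K fin[OF i] fin[OF j] _ _ \<open>d > 0\<close> enc_inj]) auto
  qed
  have one: "1 \<in> {1..m}" using m by simp
  then have "card (X 1) = k" using uniform by blast
  then have nonempty: "X 1 \<noteq> {}" using k by auto
  have total: "\<not> [(\<Sum>i\<in>{1..m}. if i = m then 1 else 0) = 0] (mod d)"
    using m d by (simp add: cong_def)
  show "\<not> globally_consistent Dom {1..m} X
          (\<lambda>i. (mod_rel Dom enc d (X i) (if i = m then 1 else 0) :: ('a \<Rightarrow> 'v) \<Rightarrow> 'k))"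
    by (rule not_globally_consistent_mod_rel[OF K finV finite_atLeastAtMost one nonempty edges
          regular \<open>d > 0\<close> total enc_inj doms])
qed

end
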